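(* Let $G_1,G_2$ be induced subgraphs of a graph $G$ with $V(G)=V(G_1)\cup V(G_2)$ and $E(G)=E(G_1)\cup E(G_2)$, let $S$ be the subgraph induced by $V(G_1)\cap V(G_2)$, suppose $G-V(S)$ is disconnected and $S$ contains a nonedge $e=xy$. Suppose: (1) $G_2\cup e$ is an atom; (2) $G_1$ or $G_1\cup e$ is an atom; (3) $G_1-A$ is connected for every clique $A\subseteq V(S)$; (4) for every clique $A\subseteq V(S)$ with $x,y\notin A$, the vertices $x$ and $y$ lie in the same connected component of $G_2-A$. Then $G$ is an atom.
   Context: A clique is a set of pairwise adjacent vertices (possibly empty). A clique separator of a graph $H$ is a clique $U$ such that $H-U$ has at least two connected components. A graph is an atom if it is nonempty and has no clique separator. $H\cup e$ denotes $H$ with $e$ added as an edge. *)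

theory Defs
  imports Main
begin

definition sgraph :: "'a set \<Rightarrow> 'a set set \<Rightarrow> bool" where
  "sgraph V E \<longleftrightarrow> finite V \<and> (\<forall>e\<in>E. e \<subseteq> V \<and> card e = 2)"

definition induced :: "'a set set \<Rightarrow> 'a set \<Rightarrow> 'a set set" where
  "induced E W = {e\<in>E. e \<subseteq> W}"

text \<open>Edge set after deleting the vertex set U (vertex set becomes V - U).\<close>
definition del_edges :: "'a set set \<Rightarrow> 'a set \<Rightarrow> 'a set set" where
  "del_edges E U = {e\<in>E. e \<inter> U = {}}"

definition reach :: "'a set \<Rightarrow> 'a set set \<Rightarrow> 'a \<Rightarrow> 'a \<Rightarrow> bool" where
  "reach V E u v \<longleftrightarrow> u \<in> V \<and> v \<in> V \<and>
     (\<lambda>a b. a \<in> V \<and> b \<in> V \<and> {a, b} \<in> E)\<^sup>*\<^sup>* u v"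

definition connected_graph :: "'a set \<Rightarrow> 'a set set \<Rightarrow> bool" where
  "connected_graph V E \<longleftrightarrow> V \<noteq> {} \<and> (\<forall>u\<in>V. \<forall>v\<in>V. reach V E u v)"

definition two_components :: "'a set \<Rightarrow> 'a set set \<Rightarrow> bool" where
  "two_components V E \<longleftrightarrow> (\<exists>u\<in>V. \<exists>v\<in>V. \<not> reach V E u v)"

definition clique :: "'a set \<Rightarrow> 'a set set \<Rightarrow> 'a set \<Rightarrow> bool" where
  "clique V E U \<longleftrightarrow> U \<subseteq> V \<and> (\<forall>u\<in>U. \<forall>v\<in>U. u \<noteq> v \<longrightarrow> {u, v} \<in> E)"

definition clique_separator :: "'a set \<Rightarrow> 'a set set \<Rightarrow> 'a set \<Rightarrow> bool" where
  "clique_separator V E U \<longleftrightarrow> clique V E U \<and> two_components (V - U) (del_edges E U)"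

definition atom :: "'a set \<Rightarrow> 'a set set \<Rightarrow> bool" where
  "atom V E \<longleftrightarrow> V \<noteq> {} \<and> \<not> (\<exists>U. clique_separator V E U)"

end

theory Submission
  imports Defs
begin

text \<open>A clique U of G lies inside V(G1) or V(G2), because every edge of G is an edge of G1 or
of G2. Since x and y are nonadjacent, U misses x or y, and then U is a clique of G1, G1 \<union> e and
G2 \<union> e. Atomicity of these graphs connects G1 - U and G2 - U inside G - U \<union> e, and the edge e
can be dropped because x and y are already connected in G - U: by (4) when U lies in V(G1), by
(3) when U lies in V(G2). The two parts share the vertex x or y, so G - U is connected.\<close>

lemma reach_edge: "a \<in> W \<Longrightarrow> b \<in> W \<Longrightarrow> {a, b} \<in> F \<Longrightarrow> reach W F a b"
  unfolding reach_def by auto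

lemma reach_trans: "reach W F a b \<Longrightarrow> reach W F b c \<Longrightarrow> reach W F a c"
  unfolding reach_def using rtranclp_trans[of _ a b c] by blast

lemma reach_sym:
  assumes "reach W F u v"
  shows "reach W F v u"
proof -
  let ?adj = "\<lambda>a b. a \<in> W \<and> b \<in> W \<and> {a, b} \<in> F"
  have "?adj\<^sup>*\<^sup>* u v" using assms unfolding reach_def by blast
  then have "?adj\<^sup>*\<^sup>* v u"
  proof (induction rule: rtranclp_induct)
    case base
    then show ?case by simp
  next
    case (step b c)
    then have "?adj c b" by (simp add: insert_commute)
    then show ?case using step.IH by (rule converse_rtranclp_into_rtranclp)
  qed
  then show ?thesis using assms unfolding reach_def by blast
qed

lemma reach_by_edges:
  assumes "reach W F u v" and "u \<in> W'"
    and edge: "\<And>a b. a \<in> W \<Longrightarrow> b \<in> W \<Longrightarrow> {a, b} \<in> F \<Longrightarrow> reach W' F' a b"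
  shows "reach W' F' u v"
proof -
  let ?adj = "\<lambda>a b. a \<in> W \<and> b \<in> W \<and> {a, b} \<in> F"
  have "?adj\<^sup>*\<^sup>* u v" using assms(1) unfolding reach_def by blast
  then show ?thesis
  proof (induction rule: rtranclp_induct)
    case base
    then show ?case using \<open>u \<in> W'\<close> unfolding reach_def by simp
  next
    case (step b c)
    have "reach W' F' b c" using step.hyps(2) by (intro edge) auto
    with step.IH show ?case by (rule reach_trans)
  qed
qed

lemma reach_mono: "reach W F u v \<Longrightarrow> W \<subseteq> W' \<Longrightarrow> F \<subseteq> F' \<Longrightarrow> reach W' F' u v"
  by (rule reach_by_edges) (auto simp: reach_def intro: reach_edge)

lemma reach_insert_edge:
  assumes "reach W (insert {x, y} F) u v"
    and "x \<in> W \<Longrightarrow> y \<in> W \<Longrightarrow> reach W F x y"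
  shows "reach W F u v"
  using assms(1)
proof (rule reach_by_edges)
  show "u \<in> W" using assms(1) by (simp add: reach_def)
next
  fix a b assume "a \<in> W" "b \<in> W" "{a, b} \<in> insert {x, y} F"
  then show "reach W F a b"
    using assms(2) reach_sym by (auto simp: doubleton_eq_iff intro: reach_edge)
qed

lemma reach_induced_del_edges:
  "reach (W - U \<inter> W) (del_edges (induced E W) (U \<inter> W)) a b \<Longrightarrow> W \<subseteq> V
    \<Longrightarrow> reach (V - U) (del_edges E U) a b"
  by (erule reach_mono) (auto simp: del_edges_def induced_def)

lemma reach_union_overlap:
  assumes "\<And>u v. u \<in> A \<Longrightarrow> v \<in> A \<Longrightarrow> reach W F u v"
    and "\<And>u v. u \<in> B \<Longrightarrow> v \<in> B \<Longrightarrow> reach W F u v"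
    and "z \<in> A \<inter> B" and "u \<in> A \<union> B" and "v \<in> A \<union> B"
  shows "reach W F u v"
proof -
  have "reach W F u z" "reach W F z v" using assms by auto
  then show ?thesis by (rule reach_trans)
qed

lemma atom_reach_avoiding_clique:
  "atom V E \<Longrightarrow> clique V E U \<Longrightarrow> u \<in> V - U \<Longrightarrow> v \<in> V - U \<Longrightarrow> reach (V - U) (del_edges E U) u v"
  unfolding atom_def clique_separator_def two_components_def by blast

lemma clique_within_side:
  assumes "V = V1 \<union> V2" and "E = induced E V1 \<union> induced E V2" and "clique V E U"
  shows "U \<subseteq> V1 \<or> U \<subseteq> V2"
proof (rule ccontr)
  assume "\<not> ?thesis"
  then obtain u w where u: "u \<in> U" "u \<notin> V1" and w: "w \<in> U" "w \<notin> V2" by auto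
  moreover have "u \<noteq> w" using u(1,2) w(2) assms(1,3) by (auto simp: clique_def)
  ultimately have "{u, w} \<in> E" using assms(3) by (auto simp: clique_def)
  then have "{u, w} \<in> induced E V1 \<union> induced E V2" using assms(2) by simp
  then show False using u w by (auto simp: induced_def)
qed

lemma reach_in_atomic_side:
  assumes "W \<subseteq> V" and "atom W F"
    and "induced E W \<subseteq> F" and "F \<subseteq> insert {x, y} (induced E W)"
    and "clique V E U"
    and xy: "x \<notin> U \<Longrightarrow> y \<notin> U \<Longrightarrow> reach (V - U) (del_edges E U) x y"
    and "u \<in> W - U" and "v \<in> W - U"
  shows "reach (V - U) (del_edges E U) u v"
proof -
  have "clique W F (U \<inter> W)"
    using assms(3,5) by (auto simp: clique_def induced_def)
  with assms(2,7,8) have "reach (W - U \<inter> W) (del_edges F (U \<inter> W)) u v"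
    by (intro atom_reach_avoiding_clique) auto
  then have "reach (V - U) (insert {x, y} (del_edges E U)) u v"
    by (rule reach_mono) (use assms(1,4) in \<open>auto simp: del_edges_def induced_def\<close>)
  then show ?thesis
    by (rule reach_insert_edge) (use xy in auto)
qed

lemma nonedge_reach_avoiding_clique:
  assumes "V1 \<subseteq> V" and "V2 \<subseteq> V"
    and "x \<in> V1 \<inter> V2" and "y \<in> V1 \<inter> V2" and "x \<notin> U" and "y \<notin> U"
    and clique: "clique (V1 \<inter> V2) (induced E (V1 \<inter> V2)) (U \<inter> V1 \<inter> V2)"
    and side: "U \<subseteq> V1 \<or> U \<subseteq> V2"
    and h3: "\<forall>A. clique (V1 \<inter> V2) (induced E (V1 \<inter> V2)) A \<longrightarrow>
               connected_graph (V1 - A) (del_edges (induced E V1) A)"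
    and h4: "\<forall>A. clique (V1 \<inter> V2) (induced E (V1 \<inter> V2)) A \<longrightarrow> x \<notin> A \<longrightarrow> y \<notin> A \<longrightarrow>
               reach (V2 - A) (del_edges (induced E V2) A) x y"
  shows "reach (V - U) (del_edges E U) x y"
  using side
proof
  assume "U \<subseteq> V1"
  then have "U \<inter> V1 \<inter> V2 = U \<inter> V2" by auto
  then have "reach (V2 - U \<inter> V2) (del_edges (induced E V2) (U \<inter> V2)) x y"
    using h4 clique assms(5,6) by auto
  then show ?thesis using assms(2) by (rule reach_induced_del_edges)
next
  assume "U \<subseteq> V2"
  then have "U \<inter> V1 \<inter> V2 = U \<inter> V1" by auto
  then have "connected_graph (V1 - U \<inter> V1) (del_edges (induced E V1) (U \<inter> V1))"
    using h3 clique by auto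
  then have "reach (V1 - U \<inter> V1) (del_edges (induced E V1) (U \<inter> V1)) x y"
    using assms(3-6) unfolding connected_graph_def by auto
  then show ?thesis using assms(1) by (rule reach_induced_del_edges)
qed

theorem mainTheorem18:
  fixes V V1 V2 :: "'a set" and E :: "'a set set" and x y :: 'a
  assumes G: "sgraph V E"
    and V1: "V1 \<subseteq> V" and V2: "V2 \<subseteq> V"
    and cover_V: "V = V1 \<union> V2"
    and cover_E: "E = induced E V1 \<union> induced E V2"
    and disc: "two_components (V - (V1 \<inter> V2)) (del_edges E (V1 \<inter> V2))"
    and x: "x \<in> V1 \<inter> V2" and y: "y \<in> V1 \<inter> V2" and xy: "x \<noteq> y"
    and nonedge: "{x, y} \<notin> E"
    and h1: "atom V2 (insert {x, y} (induced E V2))"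
    and h2: "atom V1 (induced E V1) \<or> atom V1 (insert {x, y} (induced E V1))"
    and h3: "\<forall>A. clique (V1 \<inter> V2) (induced E (V1 \<inter> V2)) A \<longrightarrow>
               connected_graph (V1 - A) (del_edges (induced E V1) A)"
    and h4: "\<forall>A. clique (V1 \<inter> V2) (induced E (V1 \<inter> V2)) A \<longrightarrow> x \<notin> A \<longrightarrow> y \<notin> A \<longrightarrow>
               reach (V2 - A) (del_edges (induced E V2) A) x y"
  shows "atom V E"
  unfolding atom_def clique_separator_def
proof (intro conjI notI)
  assume "V = {}"
  then show False using x cover_V by auto
next
  assume "\<exists>U. clique V E U \<and> two_components (V - U) (del_edges E U)"
  then obtain U where clique: "clique V E U" and separated: "two_components (V - U) (del_edges E U)"
    by blast
  have side: "U \<subseteq> V1 \<or> U \<subseteq> V2" using cover_V cover_E clique by (rule clique_within_side)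
  have "clique (V1 \<inter> V2) (induced E (V1 \<inter> V2)) (U \<inter> V1 \<inter> V2)"
    using clique by (auto simp: clique_def induced_def)
  then have reach_xy: "x \<notin> U \<Longrightarrow> y \<notin> U \<Longrightarrow> reach (V - U) (del_edges E U) x y"
    using nonedge_reach_avoiding_clique[OF V1 V2 x y _ _ _ side h3 h4] by blast
  have reach_V1: "reach (V - U) (del_edges E U) u v" if "u \<in> V1 - U" "v \<in> V1 - U" for u v
    using h2 reach_in_atomic_side[OF V1 _ _ _ clique reach_xy that] by blast
  have reach_V2: "reach (V - U) (del_edges E U) u v" if "u \<in> V2 - U" "v \<in> V2 - U" for u v
    by (rule reach_in_atomic_side[OF V2 h1 _ _ clique reach_xy that]) auto
  obtain z where "z \<in> (V1 - U) \<inter> (V2 - U)"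
    using x y xy nonedge clique by (auto simp: clique_def)
  then have "reach (V - U) (del_edges E U) u v" if "u \<in> V - U" "v \<in> V - U" for u v
    using reach_union_overlap[OF reach_V1 reach_V2] that cover_V by blast
  then show False using separated unfolding two_components_def by blast
qed

end
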